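(* Let $k$ be an algebraically closed field of characteristic zero, $\mathfrak g$ a nonzero finite-dimensional nilpotent Lie algebra over $k$, and $(A,\cdot)$ an LR-structure on $\mathfrak g$ such that the commuting family $\{L(x):x\in A\}$ has a single weight $\alpha$ on $A$ and $\alpha\ne0$. Then $A$ is commutative (so $\mathfrak g$ is abelian, and the zero product is a complete LR-structure on $\mathfrak g$).
   Context: An LR-algebra is a vector space $A$ with a bilinear product $\cdot$ satisfying $x\cdot(y\cdot z)=y\cdot(x\cdot z)$ and $(x\cdot y)\cdot z=(x\cdot z)\cdot y$ for all $x,y,z\in A$. An LR-structure on a Lie algebra $\mathfrak g$ is an LR-algebra product on the underlying vector space of $\mathfrak g$ with $x\cdot y-y\cdot x=[x,y]$. $L(x)y=x\cdot y$. An LR-structure is complete if all right multiplications $y\mapsto y\cdot x$ are nilpotent. "Single weight $\alpha$" means that each $L(x)$ has only the eigenvalue $\alpha(L(x))$, where $\alpha$ is a linear form on the span of the $L(x)$. *)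

theory Defs
  imports "HOL-Analysis.Finite_Cartesian_Product" "HOL-Computational_Algebra.Polynomial"
begin

definition alg_closed_field :: "'k::field itself \<Rightarrow> bool" where
  "alg_closed_field _ \<longleftrightarrow> (\<forall>p :: 'k poly. degree p \<noteq> 0 \<longrightarrow> (\<exists>x. poly p x = 0))"

text \<open>The finite-dimensional vector space A is k^n, n = CARD('n) \<ge> 1.
  A product m on it is bilinear.\<close>
definition bilinear_prod :: "('k::field ^ 'n \<Rightarrow> 'k ^ 'n \<Rightarrow> 'k ^ 'n) \<Rightarrow> bool" where
  "bilinear_prod m \<longleftrightarrow>
     (\<forall>a b x y z. m (a *s x + b *s y) z = a *s m x z + b *s m y z) \<and>
     (\<forall>a b x y z. m z (a *s x + b *s y) = a *s m z x + b *s m z y)"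

definition LR_algebra :: "('k::field ^ 'n \<Rightarrow> 'k ^ 'n \<Rightarrow> 'k ^ 'n) \<Rightarrow> bool" where
  "LR_algebra m \<longleftrightarrow> bilinear_prod m \<and>
     (\<forall>x y z. m x (m y z) = m y (m x z)) \<and>
     (\<forall>x y z. m (m x y) z = m (m x z) y)"

text \<open>Lie algebra (A, bracket) is nilpotent: some term of the lower central series vanishes,
  i.e. all iterated brackets [x1,[x2,...,[xN,y]...]] of length N vanish.\<close>
definition nilpotent_bracket :: "('v \<Rightarrow> 'v \<Rightarrow> 'v::zero) \<Rightarrow> bool" where
  "nilpotent_bracket br \<longleftrightarrow>
     (\<exists>N. \<forall>xs y. length xs = N \<longrightarrow> foldr br xs y = 0)"

definition is_eigenvalue :: "('k::field ^ 'n \<Rightarrow> 'k ^ 'n) \<Rightarrow> 'k \<Rightarrow> bool" where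
  "is_eigenvalue f lam \<longleftrightarrow> (\<exists>v. v \<noteq> 0 \<and> f v = lam *s v)"

text \<open>The family {L(x)} has single weight alpha: alpha is a linear form on span{L(x)}
  (which equals the image of L, L being linear), and each L(x) has only the eigenvalue alpha(L(x)).\<close>
definition single_weight ::
  "('k::field ^ 'n \<Rightarrow> 'k ^ 'n \<Rightarrow> 'k ^ 'n) \<Rightarrow> (('k ^ 'n \<Rightarrow> 'k ^ 'n) \<Rightarrow> 'k) \<Rightarrow> bool" where
  "single_weight m alpha \<longleftrightarrow>
     (\<forall>a b x y. alpha (\<lambda>v. a *s m x v + b *s m y v) = a * alpha (m x) + b * alpha (m y)) \<and>
     (\<forall>x lam. is_eigenvalue (m x) lam \<longrightarrow> lam = alpha (m x))"

end

theory Submission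
  imports Defs "HOL-Analysis.Cartesian_Space"
begin

(* Since alpha is not identically zero on the left multiplications, there is
   some u with alpha(L(u)) \<noteq> 0.  Because alpha(L(u)) is the only eigenvalue of L(u),
   the value 0 is not an eigenvalue, so the linear endomorphism L(u) of the
   finite-dimensional space A is injective and hence bijective.  In an LR-algebra whose
   left multiplication L(u) is surjective, the two LR identities force the product to be
   associative, and associativity combined with left-commutativity x(yz) = y(xz) then gives
   commutativity. *)

lemma left_mult_linear:
  assumes "bilinear_prod m"
  shows "Vector_Spaces.linear (*s) (*s) (m z)"
proof -
  have right_lin: "\<And>a b x y. m z (a *s x + b *s y) = a *s m z x + b *s m z y"
    using assms unfolding bilinear_prod_def by blast
  have "m z (x + y) = m z x + m z y" for x y
    using right_lin[of 1 x 1 y] by simp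
  moreover have "m z (r *s x) = r *s m z x" for r x
    using right_lin[of r x 0 x] by simp
  ultimately show ?thesis
    unfolding Vector_Spaces.linear_iff using vec.vector_space_axioms by blast
qed

lemma surj_if_no_zero_eigenvalue:
  fixes f :: "'k::field ^ 'n::finite \<Rightarrow> 'k ^ 'n"
  assumes lin: "Vector_Spaces.linear (*s) (*s) f"
    and no_zero: "\<not> is_eigenvalue f 0"
  shows "surj f"
proof -
  have "inj f"
    unfolding vec.linear_inj_iff_eq_0[OF lin]
    using no_zero unfolding is_eigenvalue_def by auto
  then show ?thesis
    using vec.linear_inj_imp_surj[OF lin] by blast
qed

text \<open>An LR-algebra in which some left multiplication L(u) is surjective is associative.
  Writing z = uw, both sides of (yz)x = y(zx) reduce to y((ux)w) by the LR identities.\<close>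
lemma LR_assoc_if_surj_left_mult:
  assumes left_comm: "\<And>x y z. m x (m y z) = m y (m x z)"
    and right_comm: "\<And>x y z. m (m x y) z = m (m x z) y"
    and surj_u: "surj (m u)"
  shows "m (m y z) x = m y (m z x)"
proof -
  obtain w where w: "z = m u w" using surj_u by (metis surjD)
  have "m (m y z) x = m (m u (m y w)) x" using w left_comm by simp
  also have "\<dots> = m (m u x) (m y w)" by (rule right_comm)
  also have "\<dots> = m y (m (m u x) w)" by (rule left_comm)
  also have "\<dots> = m y (m z x)" using w right_comm by simp
  finally show ?thesis .
qed

text \<open>Under the same hypothesis the LR-algebra is commutative: with y = uw,
  xy = u(xw) = (ux)w = (uw)x = yx.\<close>
lemma LR_comm_if_surj_left_mult:
  assumes left_comm: "\<And>x y z. m x (m y z) = m y (m x z)"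
    and right_comm: "\<And>x y z. m (m x y) z = m (m x z) y"
    and surj_u: "surj (m u)"
  shows "m x y = m y x"
proof -
  obtain w where w: "y = m u w" using surj_u by (metis surjD)
  have "m x y = m u (m x w)" using w left_comm by simp
  also have "\<dots> = m (m u x) w"
    using LR_assoc_if_surj_left_mult[OF left_comm right_comm surj_u] by simp
  also have "\<dots> = m y x" using w right_comm by simp
  finally show ?thesis .
qed

theorem proposition2p5:
  fixes m :: "'k::field_char_0 ^ 'n::finite \<Rightarrow> 'k ^ 'n \<Rightarrow> 'k ^ 'n"
    and alpha :: "('k ^ 'n \<Rightarrow> 'k ^ 'n) \<Rightarrow> 'k"
  assumes "alg_closed_field TYPE('k)"
    and "LR_algebra m"
    and "nilpotent_bracket (\<lambda>x y. m x y - m y x)"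
    and "single_weight m alpha"
    and "\<exists>x. alpha (m x) \<noteq> 0"
  shows "\<forall>x y. m x y = m y x"
proof -
  from assms(2) have bil: "bilinear_prod m"
    and left_comm: "\<And>x y z. m x (m y z) = m y (m x z)"
    and right_comm: "\<And>x y z. m (m x y) z = m (m x z) y"
    unfolding LR_algebra_def by auto
  from assms(5) obtain u where u: "alpha (m u) \<noteq> 0" by blast
  have "\<not> is_eigenvalue (m u) 0"
    using assms(4) u unfolding single_weight_def by fastforce
  then have "surj (m u)"
    using surj_if_no_zero_eigenvalue[OF left_mult_linear[OF bil]] by blast
  then show ?thesis
    using LR_comm_if_surj_left_mult[OF left_comm right_comm] by blast
qed

end
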